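(* Let the sequence $r$ on positive integers be defined by $r(1)=0$, $r(k)=\frac{3k}{2}+r(\frac{k}{2})$ if $k$ is even, and $r(k)=2+\frac{3(k-1)}{2}+r(\frac{k+1}{2})$ if $k\neq1$ is odd. Then for every positive integer $k$, $$r(k)\leq 3\left(2^{\lceil\log_2k\rceil}-1\right)<6k-3.$$ *)

theory Defs
  imports Complex_Main
begin

text \<open>The sequence r on positive integers; the value at 0 is an irrelevant default.\<close>
function r :: "nat \<Rightarrow> real" where
  "r k = (if k \<le> 1 then 0
          else if even k then 3 * real k / 2 + r (k div 2)
          else 2 + 3 * (real k - 1) / 2 + r ((k + 1) div 2))"
  by auto
termination
  by (relation "measure id") (auto, presburger)

end

theory Submission
  imports Defs
begin

text \<open>If \<open>k \<le> 2 ^ m\<close>, then halving (rounding up) gives an argument \<open>\<le> 2 ^ (m - 1)\<close>, and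
  the cost of the step is at most \<open>3 \<cdot> 2 ^ (m - 1)\<close>; summing this geometric series over the
  \<open>m\<close> steps down to \<open>1\<close> gives \<open>r k \<le> 3 (2 ^ m - 1)\<close>. The least admissible \<open>m\<close> is
  \<open>\<lceil>log 2 k\<rceil>\<close>, and \<open>2 ^ m < 2 k\<close> for it, which yields the second inequality.\<close>

declare r.simps [simp del]

lemma r_le_one: "k \<le> 1 \<Longrightarrow> r k = 0"
  by (simp add: r.simps [of k])

lemma r_even: "j \<ge> 1 \<Longrightarrow> r (2 * j) = 3 * real j + r j"
  by (simp add: r.simps [of "2 * j"])

lemma r_odd: "j \<ge> 1 \<Longrightarrow> r (2 * j + 1) = 3 * real j + 2 + r (j + 1)"
  by (subst r.simps) (simp add: algebra_simps)

lemma r_le_pow2: "1 \<le> k \<Longrightarrow> k \<le> 2 ^ m \<Longrightarrow> r k \<le> 3 * (2 ^ m - 1)"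
proof (induction m arbitrary: k)
  case 0
  then show ?case by (simp add: r_le_one)
next
  case (Suc m)
  consider "k = 1" | j where "j \<ge> 1" "k = 2 * j" | j where "j \<ge> 1" "k = 2 * j + 1"
    using \<open>1 \<le> k\<close> by (cases "even k"; cases "k = 1") (auto elim!: evenE oddE)
  then show ?case
  proof cases
    case 1
    then show ?thesis using one_le_power [of "2::real" "Suc m"] by (simp add: r_le_one)
  next
    case (2 j)
    then have "j \<le> 2 ^ m" using Suc.prems by simp
    then have "real j \<le> 2 ^ m" and "r j \<le> 3 * (2 ^ m - 1)"
      using Suc.IH \<open>j \<ge> 1\<close> by simp_all
    moreover have "r k = 3 * real j + r j" using \<open>k = 2 * j\<close> r_even [OF \<open>j \<ge> 1\<close>] by simp
    ultimately show ?thesis unfolding power_Suc by argo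
  next
    case (3 j)
    \<comment> \<open>\<open>k\<close> is odd, so \<open>k \<le> 2 ^ (m + 1)\<close> is strict\<close>
    have "k \<noteq> 2 ^ Suc m" using \<open>k = 2 * j + 1\<close> by (metis dvd_triv_left even_add odd_one power_Suc)
    then have "j + 1 \<le> 2 ^ m" using Suc.prems \<open>k = 2 * j + 1\<close> by simp
    then have "real (j + 1) \<le> 2 ^ m" and "r (j + 1) \<le> 3 * (2 ^ m - 1)"
      using Suc.IH [of "j + 1"] by (simp_all only: of_nat_le_numeral_power_cancel_iff le_add2)
    moreover have "r k = 3 * real j + 2 + r (j + 1)"
      using \<open>k = 2 * j + 1\<close> r_odd [OF \<open>j \<ge> 1\<close>] by simp
    ultimately show ?thesis unfolding power_Suc of_nat_add of_nat_1 by argo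
  qed
qed

lemma le_powr_ceiling_log: "0 < x \<Longrightarrow> 1 < b \<Longrightarrow> x \<le> b powr \<lceil>log b x\<rceil>"
  by (simp add: le_powr_iff)

lemma powr_ceiling_log_less:
  assumes "0 < x" and "1 < b"
  shows "b powr \<lceil>log b x\<rceil> < b * x"
proof -
  have "b powr \<lceil>log b x\<rceil> < b powr (log b x + 1)"
    using \<open>1 < b\<close> by (intro powr_less_mono) linarith+
  also have "\<dots> = b * x" using assms by (simp add: powr_add)
  finally show ?thesis .
qed

theorem lemma6:
  fixes k :: nat
  assumes "k \<ge> 1"
  shows "r k \<le> 3 * (2 powr (real_of_int (ceiling (log 2 (real k)))) - 1)
         \<and> 3 * (2 powr (real_of_int (ceiling (log 2 (real k)))) - 1) < 6 * real k - 3"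
proof -
  define m where "m = nat \<lceil>log 2 (real k)\<rceil>"
  have "log 2 (real k) \<ge> 0" using assms by simp
  then have pow: "2 powr \<lceil>log 2 (real k)\<rceil> = 2 ^ m"
    unfolding m_def by (simp add: powr_real_of_int)
  have "real k \<le> 2 ^ m" and "2 ^ m < 2 * real k"
    using le_powr_ceiling_log [of "real k" 2] powr_ceiling_log_less [of "real k" 2] assms pow
    by simp_all
  then have "r k \<le> 3 * (2 ^ m - 1)"
    using r_le_pow2 [OF assms] by simp
  with \<open>2 ^ m < 2 * real k\<close> show ?thesis by (simp add: pow)
qed

end
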